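(* If a set of desirable option sets $K\subseteq\mathscr{Q}$ is coherent, then the choice function $C_K$ is coherent.
   Context: Let $\mathcal{X}$ be a nonempty set and let $\mathscr{V}$ be the real vector space of all functions $u:\mathcal{X}\to\mathbb{R}$ (options), with pointwise operations. For $u,v\in\mathscr{V}$, $u\le v$ iff $u(x)\le v(x)$ for all $x\in\mathcal{X}$, and $u<v$ iff $u\le v$ and $u\neq v$. Let $\mathscr{V}_{>0}=\{u\in\mathscr{V}:0<u\}$ and $\mathscr{V}^s_{>0}=\{\{u\}:u\in\mathscr{V}_{>0}\}$. Let $\mathscr{Q}$ be the set of all finite subsets of $\mathscr{V}$ (including $\emptyset$). For $A\in\mathscr{Q}$ and $u\in\mathscr{V}$, $A-u=\{v-u:v\in A\}$. For a positive integer $n$, $\mathbb{R}^{n,+}=\{\boldsymbol\lambda\in\mathbb{R}^n:\lambda_j\ge0\ \forall j,\ \sum_j\lambda_j>0\}$, and for $\boldsymbol\lambda\in\mathbb{R}^n$, $\mathbf u=(u_1,\dots,u_n)\in\mathscr{V}^n$, $\boldsymbol\lambda\mathbf u=\sum_{j=1}^n\lambda_ju_j$. A choice function is a map $C:\mathscr{Q}\to\mathscr{Q}$ with $C(A)\subseteq A$ for all $A$; its rejection function is $R_C(A)=A\setminus C(A)$, and $K_C=\{A\in\mathscr{Q}:0\notin C(A\cup\{0\})\}$. $C$ is coherent if: (C0) $C(A)\neq\emptyset$ for all nonempty $A\in\mathscr{Q}$; (C1) for all $A\in\mathscr{Q}$ and $u\in A$: $u\in C(A)\iff 0\in C(A-u)$;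 (C2) $\{u\}\in K_C$ for all $u\in\mathscr{V}_{>0}$; (C3) for all $A,B\in K_C$ and all maps $\boldsymbol\lambda:A\times B\to\mathbb{R}^{2,+}$, $\{\boldsymbol\lambda(\mathbf u)\mathbf u:\mathbf u\in A\times B\}\in K_C$; (C4) $A\subseteq B\Rightarrow R_C(A)\subseteq R_C(B)$ for all $A,B\in\mathscr{Q}$. A set of desirable option sets is any $K\subseteq\mathscr{Q}$. It is coherent if for all $A,B\in K$: (K0) $A\setminus\{0\}\in K$; (K1) $\{0\}\notin K$; (K2) $\mathscr{V}^s_{>0}\subseteq K$; (K3) $\{\boldsymbol\lambda(\mathbf u)\mathbf u:\mathbf u\in A\times B\}\in K$ for every map $\boldsymbol\lambda:A\times B\to\mathbb{R}^{2,+}$; (K4) $A\cup Q\in K$ for all $Q\in\mathscr{Q}$. For $K\subseteq\mathscr{Q}$, the choice function $C_K$ is defined by $C_K(A)=\{u\in A:(A-u)\setminus\{0\}\notin K\}$ for all $A\in\mathscr{Q}$. *)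

theory Defs
  imports Complex_Main "HOL-Library.Function_Algebras"
begin

text \<open>Options are real-valued functions on a (nonempty) type 'x, with pointwise
  order and vector operations (from Function_Algebras / Main).
  Option sets in Q are finite sets of options.\<close>

type_synonym 'x opt = "'x \<Rightarrow> real"

definition Qsets :: "'x opt set set" where
  "Qsets = {A. finite A}"

definition Vpos :: "'x opt set" where
  "Vpos = {u. 0 < u}"

definition Vpos_s :: "'x opt set set" where
  "Vpos_s = {{u} | u. u \<in> Vpos}"

definition minus_set :: "'x opt set \<Rightarrow> 'x opt \<Rightarrow> 'x opt set" where
  "minus_set A u = (\<lambda>v. v - u) ` A"

definition R2plus :: "(real \<times> real) set" where
  "R2plus = {(a, b). a \<ge> 0 \<and> b \<ge> 0 \<and> a + b > 0}"

definition posi_comb :: "((real \<times> real)) \<Rightarrow> 'x opt \<times> 'x opt \<Rightarrow> 'x opt" where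
  "posi_comb l p = (\<lambda>x. fst l * fst p x + snd l * snd p x)"

definition comb_set ::
  "('x opt \<times> 'x opt \<Rightarrow> real \<times> real) \<Rightarrow> 'x opt set \<Rightarrow> 'x opt set \<Rightarrow> 'x opt set" where
  "comb_set lam A B = (\<lambda>p. posi_comb (lam p) p) ` (A \<times> B)"

definition is_choice_function :: "('x opt set \<Rightarrow> 'x opt set) \<Rightarrow> bool" where
  "is_choice_function C \<longleftrightarrow> (\<forall>A \<in> Qsets. C A \<in> Qsets \<and> C A \<subseteq> A)"

definition rejection :: "('x opt set \<Rightarrow> 'x opt set) \<Rightarrow> 'x opt set \<Rightarrow> 'x opt set" where
  "rejection C A = A - C A"

definition K_of :: "('x opt set \<Rightarrow> 'x opt set) \<Rightarrow> 'x opt set set" where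
  "K_of C = {A \<in> Qsets. 0 \<notin> C (A \<union> {0})}"

definition coherent_choice :: "('x opt set \<Rightarrow> 'x opt set) \<Rightarrow> bool" where
  "coherent_choice C \<longleftrightarrow>
     is_choice_function C \<and>
     (\<forall>A \<in> Qsets. A \<noteq> {} \<longrightarrow> C A \<noteq> {}) \<and>
     (\<forall>A \<in> Qsets. \<forall>u \<in> A. u \<in> C A \<longleftrightarrow> 0 \<in> C (minus_set A u)) \<and>
     (\<forall>u \<in> Vpos. {u} \<in> K_of C) \<and>
     (\<forall>A \<in> K_of C. \<forall>B \<in> K_of C. \<forall>lam.
        (\<forall>p \<in> A \<times> B. lam p \<in> R2plus) \<longrightarrow> comb_set lam A B \<in> K_of C) \<and>
     (\<forall>A \<in> Qsets. \<forall>B \<in> Qsets. A \<subseteq> B \<longrightarrow> rejection C A \<subseteq> rejection C B)"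

definition coherent_sdos :: "'x opt set set \<Rightarrow> bool" where
  "coherent_sdos K \<longleftrightarrow> K \<subseteq> Qsets \<and>
     (\<forall>A \<in> K. A - {0} \<in> K) \<and>
     {0} \<notin> K \<and>
     Vpos_s \<subseteq> K \<and>
     (\<forall>A \<in> K. \<forall>B \<in> K. \<forall>lam.
        (\<forall>p \<in> A \<times> B. lam p \<in> R2plus) \<longrightarrow> comb_set lam A B \<in> K) \<and>
     (\<forall>A \<in> K. \<forall>Q \<in> Qsets. A \<union> Q \<in> K)"

definition C_of :: "'x opt set set \<Rightarrow> 'x opt set \<Rightarrow> 'x opt set" where
  "C_of K A = {u \<in> A. minus_set A u - {0} \<notin> K}"

end

theory Submission
  imports Defs
begin

text \<open>By (K0) and (K4), \<open>K\<close> is closed under adding and removing \<open>0\<close>, so the set of desirable option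
  sets of \<open>C_of K\<close> is \<open>K\<close> itself, and (C2), (C3) are just (K2), (K3); (C4) is (K4).
  For (C0), suppose every \<open>u \<in> A\<close> is rejected. If \<open>u \<noteq> w\<close> are both rejected, combining
  \<open>A - u\<close> and \<open>A - w\<close> with coefficients \<open>(1,1)\<close> at the element \<open>w - u\<close> and \<open>(1,0)\<close> elsewhere
  turns \<open>w - u\<close> into an element of \<open>A - u\<close> other than \<open>w - u\<close>, so \<open>u\<close> stays rejected from
  \<open>A - {w}\<close>. Removing elements one at a time leaves a singleton whose element is rejected,
  i.e. \<open>{} \<in> K\<close>, and then \<open>{0} \<in> K\<close> by (K4), contradicting (K1).\<close>

lemma minus_set_zero [simp]: "minus_set A 0 = A"
  unfolding minus_set_def by simp

lemma finite_minus_set: "finite A \<Longrightarrow> finite (minus_set A u)"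
  unfolding minus_set_def by simp

lemma zero_in_minus_set: "u \<in> A \<Longrightarrow> 0 \<in> minus_set A u"
  unfolding minus_set_def by force

lemma rejection_C_of: "rejection (C_of K) A = {u \<in> A. minus_set A u - {0} \<in> K}"
  unfolding rejection_def C_of_def by auto

lemma coherent_sdos_superset:
  assumes "coherent_sdos K" "X \<in> K" "finite Y" "X \<subseteq> Y"
  shows "Y \<in> K"
proof -
  have "X \<union> Y \<in> K" using assms unfolding coherent_sdos_def Qsets_def by blast
  with \<open>X \<subseteq> Y\<close> show ?thesis by (simp add: sup_absorb2)
qed

lemma coherent_sdos_empty_notin:
  assumes "coherent_sdos K"
  shows "{} \<notin> K"
  using assms coherent_sdos_superset[OF assms, of "{}" "{0}"] unfolding coherent_sdos_def by auto

lemma coherent_sdos_iff_remove_zero: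
  assumes "coherent_sdos K"
  shows "A \<in> K \<longleftrightarrow> finite A \<and> A - {0} \<in> K"
  using assms coherent_sdos_superset[OF assms, of "A - {0}" A]
  unfolding coherent_sdos_def Qsets_def by blast

lemma K_of_C_of:
  assumes "coherent_sdos K"
  shows "K_of (C_of K) = K"
proof -
  have "A \<in> K_of (C_of K) \<longleftrightarrow> finite A \<and> A - {0} \<in> K" for A
    unfolding K_of_def C_of_def Qsets_def by auto
  then show ?thesis using coherent_sdos_iff_remove_zero[OF assms] by blast
qed

lemma C_of_translate: "u \<in> A \<Longrightarrow> u \<in> C_of K A \<longleftrightarrow> 0 \<in> C_of K (minus_set A u)"
  using zero_in_minus_set[of u A] unfolding C_of_def by simp

lemma rejection_C_of_mono:
  assumes "coherent_sdos K" "finite B" "A \<subseteq> B"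
  shows "rejection (C_of K) A \<subseteq> rejection (C_of K) B"
proof
  fix u assume "u \<in> rejection (C_of K) A"
  then have "u \<in> A" and "minus_set A u - {0} \<in> K" by (auto simp: rejection_C_of)
  moreover have "minus_set A u - {0} \<subseteq> minus_set B u - {0}"
    using \<open>A \<subseteq> B\<close> unfolding minus_set_def by auto
  ultimately show "u \<in> rejection (C_of K) B"
    using coherent_sdos_superset[OF assms(1)] finite_minus_set[OF assms(2)] assms(3)
    by (auto simp: rejection_C_of)
qed

lemma rejection_C_of_remove_rejected:
  fixes A :: "'x opt set"
  assumes co: "coherent_sdos K" and "finite A"
    and u: "u \<in> rejection (C_of K) A" and w: "w \<in> rejection (C_of K) A" and "u \<noteq> w"
  shows "u \<in> rejection (C_of K) (A - {w})"
proof -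
  let ?Du = "minus_set A u - {0}" and ?Dw = "minus_set A w - {0}"
  define lam :: "'x opt \<times> 'x opt \<Rightarrow> real \<times> real"
    where "lam p = (if fst p = w - u then (1, 1) else (1, 0))" for p
  have "?Du \<in> K" "?Dw \<in> K" using u w by (auto simp: rejection_C_of)
  moreover have "\<forall>p \<in> ?Du \<times> ?Dw. lam p \<in> R2plus"
    unfolding lam_def R2plus_def by auto
  ultimately have "comb_set lam ?Du ?Dw - {0} \<in> K"
    using co unfolding coherent_sdos_def by blast
  moreover have "comb_set lam ?Du ?Dw - {0} \<subseteq> minus_set (A - {w}) u - {0}"
  proof
    fix z assume "z \<in> comb_set lam ?Du ?Dw - {0}"
    then obtain a b where ab: "a \<in> ?Du" "b \<in> ?Dw"
      and z: "z = posi_comb (lam (a, b)) (a, b)" "z \<noteq> 0"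
      unfolding comb_set_def by auto
    obtain va where va: "va \<in> A" "a = va - u" using ab(1) unfolding minus_set_def by auto
    obtain vb where vb: "vb \<in> A" "vb \<noteq> w" "b = vb - w" using ab(2) unfolding minus_set_def by auto
    show "z \<in> minus_set (A - {w}) u - {0}"
    proof (cases "va = w")
      case True
      then have "z = a + b" using z(1) va(2) by (simp add: lam_def posi_comb_def fun_eq_iff)
      then have "z = vb - u" using True va(2) vb(3) by simp
      with vb z(2) show ?thesis unfolding minus_set_def by auto
    next
      case False
      then have "a \<noteq> w - u" using va(2) by simp
      then have "z = a" using z(1) by (simp add: lam_def posi_comb_def)
      then have "z = va - u" using va(2) by simp
      with va(1) False z(2) show ?thesis unfolding minus_set_def by auto
    qed
  qed
  moreover have "finite (minus_set (A - {w}) u - {0})"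
    using \<open>finite A\<close> by (simp add: finite_minus_set)
  ultimately have "minus_set (A - {w}) u - {0} \<in> K"
    by (metis coherent_sdos_superset[OF co])
  with u \<open>u \<noteq> w\<close> show ?thesis by (auto simp: rejection_C_of)
qed

lemma C_of_nonempty:
  assumes co: "coherent_sdos K" and "finite A" "A \<noteq> {}"
  shows "C_of K A \<noteq> {}"
proof -
  have "rejection (C_of K) A \<noteq> A" using \<open>finite A\<close> \<open>A \<noteq> {}\<close>
  proof (induction A rule: finite_ne_induct)
    case (singleton x)
    have "minus_set {x} x - {0} \<notin> K"
      using coherent_sdos_empty_notin[OF co] unfolding minus_set_def by simp
    then show ?case by (auto simp: rejection_C_of)
  next
    case (insert x F)
    show ?case
    proof
      assume all: "rejection (C_of K) (insert x F) = insert x F"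
      have "u \<in> rejection (C_of K) (insert x F - {x})" if "u \<in> F" for u
        using rejection_C_of_remove_rejected[OF co] insert that all by (metis finite_insert insertCI)
      moreover have "insert x F - {x} = F" using \<open>x \<notin> F\<close> by auto
      ultimately have "rejection (C_of K) F = F" unfolding rejection_def by auto
      with insert.IH show False ..
    qed
  qed
  then show ?thesis unfolding rejection_def by auto
qed

theorem proposition1:
  fixes K :: "('x \<Rightarrow> real) set set"
  assumes "coherent_sdos K"
  shows "coherent_choice (C_of K)"
proof -
  have "Vpos_s \<subseteq> K" using assms unfolding coherent_sdos_def by blast
  then have "\<forall>u \<in> Vpos. {u} \<in> K" unfolding Vpos_s_def by blast
  moreover have "\<forall>A \<in> K. \<forall>B \<in> K. \<forall>lam.
      (\<forall>p \<in> A \<times> B. lam p \<in> R2plus) \<longrightarrow> comb_set lam A B \<in> K"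
    using assms unfolding coherent_sdos_def by blast
  moreover have "is_choice_function (C_of K)"
    unfolding is_choice_function_def C_of_def Qsets_def by auto
  moreover have "\<forall>A \<in> Qsets. \<forall>u \<in> A. u \<in> C_of K A \<longleftrightarrow> 0 \<in> C_of K (minus_set A u)"
    using C_of_translate by blast
  ultimately show ?thesis
    unfolding coherent_choice_def K_of_C_of[OF assms]
    using C_of_nonempty[OF assms] rejection_C_of_mono[OF assms] by (auto simp: Qsets_def)
qed

end
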